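(* Let $t\ge2$ and let $>$ be the graded reverse lexicographic order on $\mathbb{K}[E_t]$ with $a_1>\cdots>a_t>f_1>f_2>f_3>e_1>e_2>e_3>b_1>\cdots>b_t$. Order the minimal monomial generators of $\operatorname{in}(I_{G_t})$ as follows: first the elements of $\mathcal{M}_1=\{a_ib_j:1\le j<i\le t\}$, then those of $\mathcal{M}_2=\{a_ia_jf_1f_3e_2:1\le i<j\le t\}$, then those of $\mathcal{M}_3=\{a_i^2f_1f_3e_2:1\le i\le t\}$, each set listed from smallest to largest with respect to $>$; explicitly $a_tb_{t-1}, a_tb_{t-2},\dots,a_{t-1}b_{t-2},\dots,a_2b_1,\ a_ta_{t-1}f_1f_3e_2, a_ta_{t-2}f_1f_3e_2,\dots,a_2a_1f_1f_3e_2,\ a_t^2f_1f_3e_2, a_{t-1}^2f_1f_3e_2,\dots,a_1^2f_1f_3e_2$. Then $\operatorname{in}(I_{G_t})$ has linear quotients with respect to this ordering $g_1,\dots,g_{t^2}$. Furthermore, if $n_p$ denotes the number of (variable) generators of $\langle g_1,\dots,g_{p-1}\rangle:\langle g_p\rangle$, then $\max\{n_p : 2\le p\le t^2\}=2t-2$.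
   Context: $\mathbb{K}$ is an algebraically closed field of characteristic zero. For $t\ge2$, $G_t$ is the graph with vertex set $\{x_1,x_2,y_1,\dots,y_t,z_1,z_2,w_1,w_2\}$ and edges $a_i=\{x_1,y_i\}$, $b_i=\{x_2,y_i\}$ ($1\le i\le t$), $e_1=\{x_1,z_1\}$, $e_2=\{z_1,z_2\}$, $e_3=\{z_2,x_1\}$, $f_1=\{x_2,w_1\}$, $f_2=\{w_1,w_2\}$, $f_3=\{w_2,x_2\}$. Its toric ideal $I_{G_t}$ is the kernel of the $\mathbb{K}$-algebra map from $\mathbb{K}[E_t]=\mathbb{K}[a_1,\dots,a_t,f_1,f_2,f_3,e_1,e_2,e_3,b_1,\dots,b_t]$ to the polynomial ring on the vertices sending each edge variable to the product of its two endpoints; $\operatorname{in}(I_{G_t})$ is its initial ideal with respect to $>$. A monomial ideal has linear quotients with respect to an ordering $g_1,\dots,g_m$ of its minimal generators if $\langle g_1,\dots,g_{j-1}\rangle:\langle g_j\rangle$ is generated by variables for every $j=2,\dots,m$. *)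

theory Defs
  imports "HOL-Library.Poly_Mapping" "HOL-Computational_Algebra.Polynomial"
begin

datatype vertex = X nat | Y nat | Z nat | W nat

datatype edge = A nat | B nat | Ee nat | Fe nat

fun ends :: "edge \<Rightarrow> vertex set" where
  "ends (A i) = {X 1, Y i}"
| "ends (B i) = {X 2, Y i}"
| "ends (Ee k) = (if k = 1 then {X 1, Z 1} else if k = 2 then {Z 1, Z 2}
                  else if k = 3 then {Z 2, X 1} else {})"
| "ends (Fe k) = (if k = 1 then {X 2, W 1} else if k = 2 then {W 1, W 2}
                  else if k = 3 then {W 2, X 2} else {})"

definition Et :: "nat \<Rightarrow> edge set" where
  "Et t = {A i | i. 1 \<le> i \<and> i \<le> t} \<union> {B i | i. 1 \<le> i \<and> i \<le> t}
        \<union> {Ee k | k. 1 \<le> k \<and> k \<le> 3} \<union> {Fe k | k. 1 \<le> k \<and> k \<le> 3}"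

definition is_mono :: "nat \<Rightarrow> (edge \<Rightarrow>\<^sub>0 nat) \<Rightarrow> bool" where
  "is_mono t m \<longleftrightarrow> Poly_Mapping.keys m \<subseteq> Et t"

definition is_poly :: "nat \<Rightarrow> ((edge \<Rightarrow>\<^sub>0 nat) \<Rightarrow>\<^sub>0 'k::zero) \<Rightarrow> bool" where
  "is_poly t p \<longleftrightarrow> (\<forall>m \<in> Poly_Mapping.keys p. is_mono t m)"

text \<open>Image of the monomial m under the toric map (each edge variable goes to the product
  of its endpoints): exponent vector on the vertices.\<close>
definition img :: "(edge \<Rightarrow>\<^sub>0 nat) \<Rightarrow> vertex \<Rightarrow> nat" where
  "img m v = (\<Sum>e \<in> Poly_Mapping.keys m. if v \<in> ends e then Poly_Mapping.lookup m e else 0)"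

text \<open>Toric ideal I_{G_t}: kernel of the K-algebra map K[E_t] -> K[V]
  (the coefficient of the vertex monomial u in the image of p is the sum below).\<close>
definition toric_ideal :: "nat \<Rightarrow> ((edge \<Rightarrow>\<^sub>0 nat) \<Rightarrow>\<^sub>0 'k::field) set" where
  "toric_ideal t = {p. is_poly t p \<and>
      (\<forall>u. (\<Sum>m \<in> {m \<in> Poly_Mapping.keys p. img m = u}. Poly_Mapping.lookup p m) = 0)}"

text \<open>Position of a variable in a_1 > ... > a_t > f_1 > f_2 > f_3 > e_1 > e_2 > e_3 > b_1 > ... > b_t
  (smaller index = larger variable).\<close>
fun idx :: "nat \<Rightarrow> edge \<Rightarrow> nat" where
  "idx t (A i) = i"
| "idx t (Fe k) = t + k"
| "idx t (Ee k) = t + 3 + k"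
| "idx t (B i) = t + 6 + i"

definition mdeg :: "(edge \<Rightarrow>\<^sub>0 nat) \<Rightarrow> nat" where
  "mdeg m = (\<Sum>e \<in> Poly_Mapping.keys m. Poly_Mapping.lookup m e)"

definition grevlex_less :: "nat \<Rightarrow> (edge \<Rightarrow>\<^sub>0 nat) \<Rightarrow> (edge \<Rightarrow>\<^sub>0 nat) \<Rightarrow> bool" where
  "grevlex_less t m m' \<longleftrightarrow> mdeg m < mdeg m' \<or>
     (mdeg m = mdeg m' \<and> (\<exists>v \<in> Et t. Poly_Mapping.lookup m v > Poly_Mapping.lookup m' v \<and>
        (\<forall>w \<in> Et t. idx t w > idx t v \<longrightarrow> Poly_Mapping.lookup m w = Poly_Mapping.lookup m' w)))"

definition is_lead :: "nat \<Rightarrow> ((edge \<Rightarrow>\<^sub>0 nat) \<Rightarrow>\<^sub>0 'k::zero) \<Rightarrow> (edge \<Rightarrow>\<^sub>0 nat) \<Rightarrow> bool" where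
  "is_lead t p m \<longleftrightarrow> m \<in> Poly_Mapping.keys p \<and> (\<forall>m' \<in> Poly_Mapping.keys p. m' \<noteq> m \<longrightarrow> grevlex_less t m' m)"

text \<open>The monomials lying in the initial ideal in(I_{G_t}) (a monomial ideal, represented by
  the set of its monomials = leading monomials of nonzero elements of I_{G_t}).\<close>
definition initial_monos :: "'k::field itself \<Rightarrow> nat \<Rightarrow> (edge \<Rightarrow>\<^sub>0 nat) set" where
  "initial_monos _ t = {m. \<exists>p \<in> (toric_ideal t :: ((edge \<Rightarrow>\<^sub>0 nat) \<Rightarrow>\<^sub>0 'k) set).
      p \<noteq> 0 \<and> is_lead t p m}"

definition mdvd :: "(edge \<Rightarrow>\<^sub>0 nat) \<Rightarrow> (edge \<Rightarrow>\<^sub>0 nat) \<Rightarrow> bool" where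
  "mdvd m m' \<longleftrightarrow> (\<forall>v. Poly_Mapping.lookup m v \<le> Poly_Mapping.lookup m' v)"

definition min_gens :: "(edge \<Rightarrow>\<^sub>0 nat) set \<Rightarrow> (edge \<Rightarrow>\<^sub>0 nat) set" where
  "min_gens S = {m \<in> S. \<forall>m' \<in> S. mdvd m' m \<longrightarrow> m' = m}"

text \<open>Monomials of the colon ideal <g_1,...,g_{j-1}> : <g_j> (0-based: gs!0..gs!(j-1) : gs!j).\<close>
definition colon_monos :: "nat \<Rightarrow> (edge \<Rightarrow>\<^sub>0 nat) list \<Rightarrow> nat \<Rightarrow> (edge \<Rightarrow>\<^sub>0 nat) set" where
  "colon_monos t gs j = {u. is_mono t u \<and> (\<exists>i < j. mdvd (gs ! i) (u + gs ! j))}"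

definition var :: "edge \<Rightarrow> (edge \<Rightarrow>\<^sub>0 nat)" where
  "var v = Poly_Mapping.single v 1"

definition generated_by_vars :: "nat \<Rightarrow> (edge \<Rightarrow>\<^sub>0 nat) set \<Rightarrow> bool" where
  "generated_by_vars t S \<longleftrightarrow> (\<forall>u \<in> S. \<exists>v \<in> Et t. var v \<in> S \<and> mdvd (var v) u)"

definition linear_quotients :: "nat \<Rightarrow> (edge \<Rightarrow>\<^sub>0 nat) list \<Rightarrow> bool" where
  "linear_quotients t gs \<longleftrightarrow> (\<forall>j. 1 \<le> j \<and> j < length gs \<longrightarrow> generated_by_vars t (colon_monos t gs j))"

text \<open>n_p for 1-based p: number of variable generators of <g_1..g_{p-1}> : <g_p>.\<close>
definition n_gens :: "nat \<Rightarrow> (edge \<Rightarrow>\<^sub>0 nat) list \<Rightarrow> nat \<Rightarrow> nat" where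
  "n_gens t gs p = card {v \<in> Et t. var v \<in> colon_monos t gs (p - 1)}"

definition f1f3e2 :: "edge \<Rightarrow>\<^sub>0 nat" where
  "f1f3e2 = var (Fe 1) + var (Fe 3) + var (Ee 2)"

definition gens :: "nat \<Rightarrow> (edge \<Rightarrow>\<^sub>0 nat) list" where
  "gens t =
     concat (map (\<lambda>i. map (\<lambda>j. var (A i) + var (B j)) (rev [1..<i])) (rev [2..<t+1]))
   @ concat (map (\<lambda>j. map (\<lambda>i. var (A j) + var (A i) + f1f3e2) (rev [1..<j])) (rev [2..<t+1]))
   @ map (\<lambda>i. var (A i) + var (A i) + f1f3e2) (rev [1..<t+1])"

end

theory Submission
  imports Defs
begin

(*
  The toric ideal is spanned by the binomials m - m' with img m = img m', so a monomial is an
  initial monomial iff its fibre contains a grevlex-smaller monomial.  Every listed generator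
  gen_mono d is the leading term of such a binomial gen_mono d - gen_tail d, and replacing a
  factor gen_mono d by gen_tail d lowers the weight sum_k k * deg_{a_k}.  Hence it suffices that a
  monomial divisible by no generator (a standard monomial) is the only standard monomial of its
  fibre.  It is: the degrees at z_1, z_2, w_1, w_2, x_1, x_2 force the exponents of e_2 and f_2,
  because a standard monomial divisible by f_1 f_3 e_2 has a-degree at most 1; the exponents of
  the a_k are then recovered greedily from the degrees at the y_k, since a_i b_j never divides a
  standard monomial for j < i.

  For linear quotients, every earlier generator g_i has an explicit variable (colon_witness)
  dividing g_i / gcd(g_i, g_p) that lies in the colon ideal of g_p.  The variables of that colon
  ideal never include b_t nor the a_k of largest index k occurring in g_p, so there are at most
  2t - 2 of them; the bound is attained at a_t^2 f_1 f_3 e_2, whose colon ideal is generated by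
  a_1, ..., a_(t-1), b_1, ..., b_(t-1).
*)

abbreviation lookup :: "('a \<Rightarrow>\<^sub>0 'b::zero) \<Rightarrow> 'a \<Rightarrow> 'b" where
  "lookup \<equiv> Poly_Mapping.lookup"

lemma sorted_wrt_concat_map:
  "(\<And>x. x \<in> set xs \<Longrightarrow> sorted_wrt P (f x)) \<Longrightarrow>
   sorted_wrt (\<lambda>x y. \<forall>a\<in>set (f x). \<forall>b\<in>set (f y). P a b) xs \<Longrightarrow>
   sorted_wrt P (concat (map f xs))"
  by (induction xs) (auto simp: sorted_wrt_append)

lemma distinct_if_sorted_wrt_irrefl: "sorted_wrt P xs \<Longrightarrow> (\<And>x. \<not> P x x) \<Longrightarrow> distinct xs"
  by (induction xs) auto

lemma sorted_wrt_ex_nth_less_iff: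
  assumes "sorted_wrt P xs" "\<And>x. \<not> P x x" "\<And>x y. P x y \<Longrightarrow> \<not> P y x" "q < length xs"
  shows "(\<exists>i<q. Q (xs ! i)) \<longleftrightarrow> (\<exists>x\<in>set xs. P x (xs ! q) \<and> Q x)"
proof
  assume "\<exists>i<q. Q (xs ! i)"
  then show "\<exists>x\<in>set xs. P x (xs ! q) \<and> Q x"
    using sorted_wrt_nth_less[OF assms(1) _ assms(4)] assms(4) by force
next
  assume "\<exists>x\<in>set xs. P x (xs ! q) \<and> Q x"
  then obtain i where i: "i < length xs" "P (xs ! i) (xs ! q)" "Q (xs ! i)"
    by (auto simp: in_set_conv_nth)
  have "i < q"
  proof (rule ccontr)
    assume "\<not> i < q"
    then consider "i = q" | "q < i" by linarith
    then show False
      using i assms(2,3) sorted_wrt_nth_less[OF assms(1) _ i(1)] by cases blast+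
  qed
  with i show "\<exists>i<q. Q (xs ! i)" by blast
qed

lemma sum_le_1_if_disjoint_support:
  fixes f :: "'a \<Rightarrow> nat"
  assumes "finite S" and "\<forall>i\<in>S. f i \<le> 1" and "\<forall>i\<in>S. \<forall>j\<in>S. i \<noteq> j \<longrightarrow> f i = 0 \<or> f j = 0"
  shows "sum f S \<le> 1"
proof (cases "\<forall>i\<in>S. f i = 0")
  case False
  then obtain i where i: "i \<in> S" "f i \<noteq> 0" by blast
  have "f j = 0" if "j \<in> S - {i}" for j
    using assms(3) i that by auto
  then have "sum f (S - {i}) = 0" by simp
  with i assms(1,2) show ?thesis by (simp add: sum.remove)
qed simp

lemma lookup_var [simp]: "lookup (var a) w = (if a = w then 1 else 0)"
  by (simp add: var_def Poly_Mapping.lookup_single when_def)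

lemma keys_var [simp]: "Poly_Mapping.keys (var a) = {a}"
  by (simp add: var_def)

lemma mdvd_refl [simp]: "mdvd m m"
  by (simp add: mdvd_def)

lemma mdvd_trans: "mdvd m m' \<Longrightarrow> mdvd m' m'' \<Longrightarrow> mdvd m m''"
  unfolding mdvd_def using le_trans by blast

lemma mdvd_antisym: "mdvd m m' \<Longrightarrow> mdvd m' m \<Longrightarrow> m = m'"
  unfolding mdvd_def by (rule poly_mapping_eqI) (simp add: le_antisym)

lemma mdvd_diff_add: "mdvd m m' \<Longrightarrow> m' - m + m = m'"
  by (rule poly_mapping_eqI) (auto simp: mdvd_def Poly_Mapping.lookup_add Poly_Mapping.lookup_minus)

lemma keys_add_nat: "Poly_Mapping.keys (m + m' :: _ \<Rightarrow>\<^sub>0 nat) = Poly_Mapping.keys m \<union> Poly_Mapping.keys m'"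
  by (auto simp: Poly_Mapping.in_keys_iff Poly_Mapping.lookup_add)

lemma mdvd_iff_keys: "mdvd m m' \<longleftrightarrow> (\<forall>v\<in>Poly_Mapping.keys m. lookup m v \<le> lookup m' v)"
  by (auto simp: mdvd_def Poly_Mapping.in_keys_iff)

lemma is_mono_var_iff [simp]: "is_mono t (var v) \<longleftrightarrow> v \<in> Et t"
  by (simp add: is_mono_def)

lemma is_mono_add: "is_mono t m \<Longrightarrow> is_mono t m' \<Longrightarrow> is_mono t (m + m')"
  unfolding is_mono_def using Poly_Mapping.keys_add[of m m'] by blast

lemma is_mono_diff: "is_mono t m \<Longrightarrow> is_mono t (m - m')"
  unfolding is_mono_def by (auto simp: Poly_Mapping.in_keys_iff Poly_Mapping.lookup_minus)

lemma lookup_outside_Et: "is_mono t m \<Longrightarrow> e \<notin> Et t \<Longrightarrow> lookup m e = 0"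
  unfolding is_mono_def by (meson Poly_Mapping.in_keys_iff subsetD)

lemma mem_Et [simp]:
  "A k \<in> Et t \<longleftrightarrow> 1 \<le> k \<and> k \<le> t"
  "B k \<in> Et t \<longleftrightarrow> 1 \<le> k \<and> k \<le> t"
  "Ee k \<in> Et t \<longleftrightarrow> 1 \<le> k \<and> k \<le> 3"
  "Fe k \<in> Et t \<longleftrightarrow> 1 \<le> k \<and> k \<le> 3"
  by (auto simp: Et_def)

lemma finite_Et: "finite (Et t)"
proof -
  have "Et t = A ` {1..t} \<union> B ` {1..t} \<union> Ee ` {1..3} \<union> Fe ` {1..3}"
    by (auto simp: Et_def)
  then show ?thesis by simp
qed

lemma img_eq_sum_superset:
  "finite S \<Longrightarrow> Poly_Mapping.keys m \<subseteq> S \<Longrightarrow>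
    img m v = (\<Sum>e\<in>S. if v \<in> ends e then lookup m e else 0)"
  unfolding img_def by (rule sum.mono_neutral_left) (auto simp: Poly_Mapping.in_keys_iff)

lemma mdeg_eq_sum_superset:
  "finite S \<Longrightarrow> Poly_Mapping.keys m \<subseteq> S \<Longrightarrow> mdeg m = (\<Sum>e\<in>S. lookup m e)"
  unfolding mdeg_def by (rule sum.mono_neutral_left) (auto simp: Poly_Mapping.in_keys_iff)

lemma img_add: "img (m + m') = (\<lambda>v. img m v + img m' v)"
proof
  fix v
  let ?S = "Poly_Mapping.keys m \<union> Poly_Mapping.keys m'"
  have "img (m + m') v = (\<Sum>e\<in>?S. if v \<in> ends e then lookup (m + m') e else 0)"
    using Poly_Mapping.keys_add[of m m'] by (intro img_eq_sum_superset) auto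
  also have "\<dots> = (\<Sum>e\<in>?S. (if v \<in> ends e then lookup m e else 0)
                        + (if v \<in> ends e then lookup m' e else 0))"
    by (intro sum.cong) (auto simp: Poly_Mapping.lookup_add)
  also have "\<dots> = img m v + img m' v"
    by (simp add: sum.distrib img_eq_sum_superset[of ?S])
  finally show "img (m + m') v = img m v + img m' v" .
qed

lemma img_var: "img (var e) v = (if v \<in> ends e then 1 else 0)"
  by (simp add: img_def)

lemma mdeg_add: "mdeg (m + m') = mdeg m + mdeg m'"
proof -
  let ?S = "Poly_Mapping.keys m \<union> Poly_Mapping.keys m'"
  have "mdeg (m + m') = (\<Sum>e\<in>?S. lookup (m + m') e)"
    using Poly_Mapping.keys_add[of m m'] by (intro mdeg_eq_sum_superset) auto
  also have "\<dots> = mdeg m + mdeg m'"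
    by (simp add: Poly_Mapping.lookup_add sum.distrib mdeg_eq_sum_superset[of ?S])
  finally show ?thesis .
qed

lemma mdeg_var: "mdeg (var e) = 1"
  by (simp add: mdeg_def)

lemma sum_Et:
  "sum f (Et t) = (\<Sum>i=1..t. f (A i)) + (\<Sum>i=1..t. f (B i))
     + (f (Ee 1) + f (Ee 2) + f (Ee 3)) + (f (Fe 1) + f (Fe 2) + f (Fe 3))"
proof -
  have Et: "Et t = A ` {1..t} \<union> B ` {1..t} \<union> Ee ` {1..3} \<union> Fe ` {1..3}"
    by (auto simp: Et_def)
  have "sum f (Et t) = sum f (A ` {1..t}) + sum f (B ` {1..t}) + sum f (Ee ` {1..3}) + sum f (Fe ` {1..3})"
    unfolding Et by (subst sum.union_disjoint; auto)+
  also have "{1..3::nat} = {1, 2, 3}"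
    by auto
  finally show ?thesis
    by (simp add: sum.reindex inj_on_def add.assoc)
qed

lemma img_at_vertices:
  assumes "is_mono t m"
  shows "img m (X 1) = (\<Sum>i=1..t. lookup m (A i)) + lookup m (Ee 1) + lookup m (Ee 3)"
    and "img m (X 2) = (\<Sum>i=1..t. lookup m (B i)) + lookup m (Fe 1) + lookup m (Fe 3)"
    and "1 \<le> k \<Longrightarrow> k \<le> t \<Longrightarrow> img m (Y k) = lookup m (A k) + lookup m (B k)"
    and "img m (Z 1) = lookup m (Ee 1) + lookup m (Ee 2)"
    and "img m (Z 2) = lookup m (Ee 2) + lookup m (Ee 3)"
    and "img m (W 1) = lookup m (Fe 1) + lookup m (Fe 2)"
    and "img m (W 2) = lookup m (Fe 2) + lookup m (Fe 3)"
  using assms by (simp_all add: is_mono_def img_eq_sum_superset[OF finite_Et] sum_Et)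

lemma inj_on_idx: "inj_on (idx t) (Et t)"
proof
  fix v w assume "v \<in> Et t" "w \<in> Et t" "idx t v = idx t w"
  then show "v = w" by (cases v; cases w) (auto simp: Et_def)
qed

lemma grevlex_less_irrefl: "\<not> grevlex_less t m m"
  by (simp add: grevlex_less_def)

lemma grevlex_less_trans:
  assumes "grevlex_less t m1 m2" and "grevlex_less t m2 m3"
  shows "grevlex_less t m1 m3"
proof (cases "mdeg m1 < mdeg m3")
  case False
  with assms have deg: "mdeg m1 = mdeg m2" "mdeg m2 = mdeg m3"
    by (auto simp: grevlex_less_def)
  from assms deg obtain v1 where v1: "v1 \<in> Et t" "lookup m1 v1 > lookup m2 v1"
      "\<forall>w\<in>Et t. idx t w > idx t v1 \<longrightarrow> lookup m1 w = lookup m2 w"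
    by (auto simp: grevlex_less_def)
  from assms deg obtain v2 where v2: "v2 \<in> Et t" "lookup m2 v2 > lookup m3 v2"
      "\<forall>w\<in>Et t. idx t w > idx t v2 \<longrightarrow> lookup m2 w = lookup m3 w"
    by (auto simp: grevlex_less_def)
  consider "idx t v1 < idx t v2" | "v1 = v2" | "idx t v2 < idx t v1"
    using inj_on_idx[of t] v1(1) v2(1) by (metis inj_onD linorder_neqE_nat)
  then show ?thesis
    using deg v1 v2 unfolding grevlex_less_def by cases force+
qed (simp add: grevlex_less_def)

lemma grevlex_less_add_left: "grevlex_less t m m' \<Longrightarrow> grevlex_less t (n + m) (n + m')"
  unfolding grevlex_less_def mdeg_add by (auto simp: Poly_Mapping.lookup_add)

section \<open>Initial monomials of the toric ideal\<close>

lemma lead_of_toric_ideal_has_smaller_mate: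
  fixes p :: "(edge \<Rightarrow>\<^sub>0 nat) \<Rightarrow>\<^sub>0 'k::field"
  assumes p: "p \<in> toric_ideal t" and lead: "is_lead t p m"
  shows "\<exists>m'. is_mono t m' \<and> img m' = img m \<and> m' \<noteq> m \<and> grevlex_less t m' m"
proof -
  let ?F = "{x \<in> Poly_Mapping.keys p. img x = img m}"
  have m: "m \<in> Poly_Mapping.keys p" using lead by (simp add: is_lead_def)
  have "(\<Sum>x\<in>?F. lookup p x) = 0" using p by (simp add: toric_ideal_def)
  moreover have "lookup p m \<noteq> 0" using m by (simp add: Poly_Mapping.in_keys_iff)
  ultimately have "?F \<noteq> {m}" by force
  with m obtain m' where m': "m' \<in> Poly_Mapping.keys p" "img m' = img m" "m' \<noteq> m" by blast
  moreover have "is_mono t m'" using p m'(1) by (simp add: toric_ideal_def is_poly_def)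
  moreover have "grevlex_less t m' m" using lead m' by (simp add: is_lead_def)
  ultimately show ?thesis by blast
qed

definition binomial_poly :: "(edge \<Rightarrow>\<^sub>0 nat) \<Rightarrow> (edge \<Rightarrow>\<^sub>0 nat) \<Rightarrow> (edge \<Rightarrow>\<^sub>0 nat) \<Rightarrow>\<^sub>0 'k::field" where
  "binomial_poly m m' = Poly_Mapping.single m 1 - Poly_Mapping.single m' 1"

lemma lookup_binomial_poly:
  "m' \<noteq> m \<Longrightarrow> lookup (binomial_poly m m') x = (if x = m then 1 else if x = m' then -1 else 0)"
  by (auto simp: binomial_poly_def Poly_Mapping.lookup_minus Poly_Mapping.lookup_single when_def)

lemma keys_binomial_poly: "m' \<noteq> m \<Longrightarrow> Poly_Mapping.keys (binomial_poly m m') = {m, m'}"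
  by (auto simp: Poly_Mapping.in_keys_iff lookup_binomial_poly split: if_splits)

lemma binomial_poly_in_toric_ideal:
  assumes "is_mono t m" "is_mono t m'" "img m' = img m" "m' \<noteq> m"
  shows "binomial_poly m m' \<in> toric_ideal t"
proof -
  have "{x \<in> Poly_Mapping.keys (binomial_poly m m'). img x = u} = (if img m = u then {m, m'} else {})"
    for u
    using assms(3,4) by (auto simp: keys_binomial_poly)
  then show ?thesis
    using assms by (simp add: toric_ideal_def is_poly_def keys_binomial_poly lookup_binomial_poly)
qed

lemma initial_monos_iff:
  "m \<in> initial_monos TYPE('k::field) t \<longleftrightarrow>
     is_mono t m \<and> (\<exists>m'. is_mono t m' \<and> img m' = img m \<and> m' \<noteq> m \<and> grevlex_less t m' m)"
proof
  assume "m \<in> initial_monos TYPE('k) t"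
  then obtain p :: "(edge \<Rightarrow>\<^sub>0 nat) \<Rightarrow>\<^sub>0 'k" where p: "p \<in> toric_ideal t" "is_lead t p m"
    by (auto simp: initial_monos_def)
  then have "is_mono t m" by (auto simp: toric_ideal_def is_poly_def is_lead_def)
  with lead_of_toric_ideal_has_smaller_mate[OF p] show "is_mono t m \<and> (\<exists>m'. is_mono t m' \<and> img m' = img m \<and> m' \<noteq> m \<and> grevlex_less t m' m)"
    by blast
next
  assume "is_mono t m \<and> (\<exists>m'. is_mono t m' \<and> img m' = img m \<and> m' \<noteq> m \<and> grevlex_less t m' m)"
  then obtain m' where m: "is_mono t m" and m': "is_mono t m'" "img m' = img m" "m' \<noteq> m"
      and less: "grevlex_less t m' m"
    by blast
  have "binomial_poly m m' \<noteq> (0 :: _ \<Rightarrow>\<^sub>0 'k)"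
    using keys_binomial_poly[OF m'(3)] by (metis Poly_Mapping.keys_zero insert_not_empty)
  moreover have "is_lead t (binomial_poly m m' :: _ \<Rightarrow>\<^sub>0 'k) m"
    using less m'(3) by (simp add: is_lead_def keys_binomial_poly)
  ultimately show "m \<in> initial_monos TYPE('k) t"
    using binomial_poly_in_toric_ideal[OF m m'] unfolding initial_monos_def by blast
qed

datatype gen_index = M1 nat nat | M2 nat nat | M3 nat

fun gen_mono :: "gen_index \<Rightarrow> edge \<Rightarrow>\<^sub>0 nat" where
  "gen_mono (M1 i j) = var (A i) + var (B j)"
| "gen_mono (M2 i j) = var (A j) + var (A i) + f1f3e2"
| "gen_mono (M3 i) = var (A i) + var (A i) + f1f3e2"

fun gen_tail :: "gen_index \<Rightarrow> edge \<Rightarrow>\<^sub>0 nat" where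
  "gen_tail (M1 i j) = var (A j) + var (B i)"
| "gen_tail (M2 i j) = var (Ee 1) + var (Ee 3) + var (B j) + var (B i) + var (Fe 2)"
| "gen_tail (M3 i) = var (Ee 1) + var (Ee 3) + var (B i) + var (B i) + var (Fe 2)"

definition gen_indices :: "nat \<Rightarrow> gen_index list" where
  "gen_indices t =
     concat (map (\<lambda>i. map (M1 i) (rev [1..<i])) (rev [2..<t+1]))
   @ concat (map (\<lambda>j. map (\<lambda>i. M2 i j) (rev [1..<j])) (rev [2..<t+1]))
   @ map M3 (rev [1..<t+1])"

lemma gens_eq_map_gen_mono: "gens t = map gen_mono (gen_indices t)"
  by (simp add: gens_def gen_indices_def map_concat o_def)

lemma mem_gen_indices [simp]:
  "M1 i j \<in> set (gen_indices t) \<longleftrightarrow> 1 \<le> j \<and> j < i \<and> i \<le> t"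
  "M2 i j \<in> set (gen_indices t) \<longleftrightarrow> 1 \<le> i \<and> i < j \<and> j \<le> t"
  "M3 i \<in> set (gen_indices t) \<longleftrightarrow> 1 \<le> i \<and> i \<le> t"
  by (auto simp del: upt_Suc simp: gen_indices_def image_iff)

fun listed_before :: "gen_index \<Rightarrow> gen_index \<Rightarrow> bool" where
  "listed_before (M1 i j) (M1 k l) \<longleftrightarrow> k < i \<or> (k = i \<and> l < j)"
| "listed_before (M1 _ _) _ \<longleftrightarrow> True"
| "listed_before (M2 i j) (M2 k l) \<longleftrightarrow> l < j \<or> (l = j \<and> k < i)"
| "listed_before (M2 _ _) (M3 _) \<longleftrightarrow> True"
| "listed_before (M3 i) (M3 k) \<longleftrightarrow> k < i"
| "listed_before _ _ \<longleftrightarrow> False"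

lemma listed_before_irrefl: "\<not> listed_before d d"
  by (cases d) auto

lemma listed_before_asym: "listed_before d d' \<Longrightarrow> \<not> listed_before d' d"
  by (cases d; cases d') auto

lemma sorted_gen_indices: "sorted_wrt listed_before (gen_indices t)"
  unfolding gen_indices_def sorted_wrt_append
  by (auto simp del: upt_Suc simp: sorted_wrt_map sorted_wrt_rev
      intro!: sorted_wrt_concat_map sorted_wrt_mono_rel[OF _ sorted_wrt_upt])

lemma length_gen_indices: "length (gen_indices t) = t ^ 2"
proof -
  have "length (concat (map (\<lambda>i. map (f i) (rev [1..<i])) (rev [2..<t+1]))) = (\<Sum>i\<in>{2..t}. i - 1)"
    for f :: "nat \<Rightarrow> nat \<Rightarrow> gen_index"
    by (simp del: upt_Suc add: length_concat o_def sum_list_rev atLeastLessThanSuc_atLeastAtMost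
        flip: rev_map sum_set_upt_conv_sum_list_nat)
  moreover have "2 * (\<Sum>i\<in>{2..t}. i - 1) + t = t ^ 2"
    by (induction t) (auto simp: power2_eq_square)
  ultimately show ?thesis
    by (simp add: gen_indices_def)
qed

lemma img_gen_tail: "img (gen_tail d) = img (gen_mono d)"
proof
  fix v
  show "img (gen_tail d) v = img (gen_mono d) v"
    by (cases d; cases v) (auto simp: img_add img_var f1f3e2_def)
qed

lemma is_mono_gen_mono: "d \<in> set (gen_indices t) \<Longrightarrow> is_mono t (gen_mono d)"
  by (cases d) (auto simp: f1f3e2_def intro!: is_mono_add)

lemma is_mono_gen_tail: "d \<in> set (gen_indices t) \<Longrightarrow> is_mono t (gen_tail d)"
  by (cases d) (auto intro!: is_mono_add)

lemma gen_tail_grevlex_less: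
  assumes "d \<in> set (gen_indices t)"
  shows "grevlex_less t (gen_tail d) (gen_mono d)"
proof -
  have deg: "mdeg (gen_tail d) = mdeg (gen_mono d)"
    by (cases d) (simp_all add: mdeg_add mdeg_var f1f3e2_def)
  define b where "b = (case d of M1 i j \<Rightarrow> i | M2 i j \<Rightarrow> j | M3 i \<Rightarrow> i)"
  \<comment> \<open>B b is the smallest variable of gen_tail d, and it does not occur in gen_mono d\<close>
  have "B b \<in> Et t" "lookup (gen_tail d) (B b) > lookup (gen_mono d) (B b)"
    using assms by (cases d rule: gen_index.exhaust; simp add: b_def Poly_Mapping.lookup_add f1f3e2_def)+
  moreover have "lookup (gen_tail d) w = lookup (gen_mono d) w"
    if "w \<in> Et t" "idx t w > idx t (B b)" for w
    using assms that by (cases d rule: gen_index.exhaust; cases w) (simp_all add: b_def Poly_Mapping.lookup_add f1f3e2_def)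
  ultimately show ?thesis
    using deg unfolding grevlex_less_def by blast
qed

definition a_weight :: "nat \<Rightarrow> (edge \<Rightarrow>\<^sub>0 nat) \<Rightarrow> nat" where
  "a_weight t m = (\<Sum>k\<in>{1..t}. k * lookup m (A k))"

lemma a_weight_add: "a_weight t (m + m') = a_weight t m + a_weight t m'"
  by (simp add: a_weight_def Poly_Mapping.lookup_add algebra_simps sum.distrib)

lemma a_weight_var: "a_weight t (var v) = (case v of A k \<Rightarrow> if 1 \<le> k \<and> k \<le> t then k else 0 | _ \<Rightarrow> 0)"
  by (cases v) (auto simp: a_weight_def if_distrib cong: if_cong)

lemma gen_tail_a_weight_less:
  "d \<in> set (gen_indices t) \<Longrightarrow> a_weight t (gen_tail d) < a_weight t (gen_mono d)"
  by (cases d) (auto simp: a_weight_add a_weight_var f1f3e2_def)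

lemma reduction_step:
  assumes d: "d \<in> set (gen_indices t)" and dvd: "mdvd (gen_mono d) m" and m: "is_mono t m"
  defines "m' \<equiv> m - gen_mono d + gen_tail d"
  shows "is_mono t m'" "img m' = img m" "a_weight t m' < a_weight t m" "grevlex_less t m' m"
proof -
  have split: "m = m - gen_mono d + gen_mono d"
    using dvd by (simp add: mdvd_diff_add)
  show "is_mono t m'"
    unfolding m'_def by (intro is_mono_add is_mono_diff m is_mono_gen_tail d)
  show "img m' = img m"
    by (subst split) (simp add: m'_def img_add img_gen_tail)
  show "a_weight t m' < a_weight t m"
    by (subst split) (simp add: m'_def a_weight_add gen_tail_a_weight_less[OF d])
  show "grevlex_less t m' m"
    by (subst split) (simp add: m'_def grevlex_less_add_left gen_tail_grevlex_less[OF d])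
qed

lemma lookup_f1f3e2 [simp]: "lookup f1f3e2 v = (if v = Fe 1 \<or> v = Fe 3 \<or> v = Ee 2 then 1 else 0)"
  by (auto simp: f1f3e2_def Poly_Mapping.lookup_add)

lemma mdvd_generator_iff [simp]:
  "mdvd (var (A i) + var (B j)) m \<longleftrightarrow> 0 < lookup m (A i) \<and> 0 < lookup m (B j)"
  "i \<noteq> j \<Longrightarrow> mdvd (var (A j) + var (A i) + f1f3e2) m \<longleftrightarrow> 0 < lookup m (A i) \<and> 0 < lookup m (A j)
     \<and> 0 < lookup m (Fe 1) \<and> 0 < lookup m (Fe 3) \<and> 0 < lookup m (Ee 2)"
  "mdvd (var (A i) + var (A i) + f1f3e2) m \<longleftrightarrow> 2 \<le> lookup m (A i)
     \<and> 0 < lookup m (Fe 1) \<and> 0 < lookup m (Fe 3) \<and> 0 < lookup m (Ee 2)"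
  by (auto simp: mdvd_iff_keys keys_add_nat Poly_Mapping.lookup_add f1f3e2_def)

section \<open>Standard monomials\<close>

definition standard :: "nat \<Rightarrow> (edge \<Rightarrow>\<^sub>0 nat) \<Rightarrow> bool" where
  "standard t m \<longleftrightarrow> (\<forall>d\<in>set (gen_indices t). \<not> mdvd (gen_mono d) m)"

lemma standard_not_mdvd: "standard t m \<Longrightarrow> d \<in> set (gen_indices t) \<Longrightarrow> \<not> mdvd (gen_mono d) m"
  by (simp add: standard_def)

lemma standard_A_B_zero:
  assumes "standard t m" "1 \<le> j" "j < i" "i \<le> t"
  shows "lookup m (A i) = 0 \<or> lookup m (B j) = 0"
proof -
  have "\<not> mdvd (gen_mono (M1 i j)) m"
    using assms by (intro standard_not_mdvd) simp_all
  then show ?thesis by auto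
qed

lemma standard_sum_A_le_1:
  assumes "standard t m" "0 < lookup m (Fe 1)" "0 < lookup m (Fe 3)" "0 < lookup m (Ee 2)"
  shows "(\<Sum>i=1..t. lookup m (A i)) \<le> 1"
proof (rule sum_le_1_if_disjoint_support)
  have "lookup m (A i) \<le> 1" if "1 \<le> i" "i \<le> t" for i
  proof -
    have "\<not> mdvd (gen_mono (M3 i)) m"
      using assms that by (intro standard_not_mdvd) simp_all
    then show ?thesis using assms by simp
  qed
  then show "\<forall>i\<in>{1..t}. lookup m (A i) \<le> 1" by simp
  have "lookup m (A i) = 0 \<or> lookup m (A j) = 0" if "1 \<le> i" "i < j" "j \<le> t" for i j
  proof -
    have "\<not> mdvd (gen_mono (M2 i j)) m"
      using assms that by (intro standard_not_mdvd) simp_all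
    then show ?thesis using assms that by auto
  qed
  then show "\<forall>i\<in>{1..t}. \<forall>j\<in>{1..t}. i \<noteq> j \<longrightarrow> lookup m (A i) = 0 \<or> lookup m (A j) = 0"
    by (metis atLeastAtMost_iff linorder_neqE_nat)
qed simp

lemma standard_A_greedy:
  assumes "standard t m" and k: "1 \<le> k" "k \<le> t"
  shows "lookup m (A k) = min (lookup m (A k) + lookup m (B k))
     ((\<Sum>i=1..t. lookup m (A i)) - (\<Sum>i=1..<k. lookup m (A i)))"
proof -
  let ?a = "\<lambda>i. lookup m (A i)"
  have "{1..t} = insert k ({1..<k} \<union> {k<..t})" using k by auto
  then have split: "(\<Sum>i=1..t. ?a i) = (\<Sum>i=1..<k. ?a i) + ?a k + (\<Sum>i\<in>{k<..t}. ?a i)"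
    by (simp, subst sum.union_disjoint) auto
  show ?thesis
  proof (cases "\<exists>i\<in>{k<..t}. ?a i \<noteq> 0")
    case True
    then have "lookup m (B k) = 0"
      using standard_A_B_zero[OF assms(1) k(1)] by force
    then show ?thesis using split by simp
  qed (use split in simp)
qed

lemma triangle_exponents_determined:
  fixes e1 e2 e3 f1 f2 f3 a b e1' e2' e3' f1' f2' f3' a' b' :: nat
  assumes "e1 + e2 = e1' + e2'" "e2 + e3 = e2' + e3'" "f1 + f2 = f1' + f2'" "f2 + f3 = f2' + f3'"
    and "a + e1 + e3 = a' + e1' + e3'" "b + f1 + f3 = b' + f1' + f3'" "a + b = a' + b'"
    and "0 < f1 \<and> 0 < f3 \<and> 0 < e2 \<longrightarrow> a \<le> 1"
    and "0 < f1' \<and> 0 < f3' \<and> 0 < e2' \<longrightarrow> a' \<le> 1"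
  shows "e2 = e2'" "f2 = f2'"
proof -
  \<comment> \<open>if e2 < e2' then a' \<ge> a + 2 while f1', f3' and e2' are all positive\<close>
  have "\<not> e2 < e2'" "\<not> e2' < e2"
    using assms by linarith+
  then show "e2 = e2'" by linarith
  then show "f2 = f2'" using assms(1-7) by linarith
qed

lemma standard_A_determined:
  assumes "standard t m" "standard t m'"
    and sum_eq: "(\<Sum>i=1..t. lookup m (A i)) = (\<Sum>i=1..t. lookup m' (A i))"
    and Y_eq: "\<And>k. 1 \<le> k \<Longrightarrow> k \<le> t \<Longrightarrow> lookup m (A k) + lookup m (B k) = lookup m' (A k) + lookup m' (B k)"
  shows "1 \<le> k \<Longrightarrow> k \<le> t \<Longrightarrow> lookup m (A k) = lookup m' (A k)"
proof (induction k rule: less_induct)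
  case (less k)
  then have "(\<Sum>i=1..<k. lookup m (A i)) = (\<Sum>i=1..<k. lookup m' (A i))"
    by (intro sum.cong) auto
  with less.prems show ?case
    using standard_A_greedy[OF assms(1) less.prems] standard_A_greedy[OF assms(2) less.prems]
      sum_eq Y_eq[OF less.prems] by simp
qed

lemma standard_unique_in_fibre:
  assumes m: "is_mono t m" "standard t m" and m': "is_mono t m'" "standard t m'"
    and fibre: "img m = img m'"
  shows "m = m'"
proof -
  note vertices = img_at_vertices[OF m(1)] img_at_vertices[OF m'(1)]
  have at: "img m v = img m' v" for v
    using fibre by simp
  have Y: "lookup m (A k) + lookup m (B k) = lookup m' (A k) + lookup m' (B k)" if "1 \<le> k" "k \<le> t" for k
    using at[of "Y k"] that by (simp add: vertices)
  have X1: "(\<Sum>i=1..t. lookup m (A i)) + lookup m (Ee 1) + lookup m (Ee 3)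
      = (\<Sum>i=1..t. lookup m' (A i)) + lookup m' (Ee 1) + lookup m' (Ee 3)"
    using at[of "X 1"] by (simp only: vertices)
  have X2: "(\<Sum>i=1..t. lookup m (B i)) + lookup m (Fe 1) + lookup m (Fe 3)
      = (\<Sum>i=1..t. lookup m' (B i)) + lookup m' (Fe 1) + lookup m' (Fe 3)"
    using at[of "X 2"] by (simp only: vertices)
  have Z1: "lookup m (Ee 1) + lookup m (Ee 2) = lookup m' (Ee 1) + lookup m' (Ee 2)"
    and Z2: "lookup m (Ee 2) + lookup m (Ee 3) = lookup m' (Ee 2) + lookup m' (Ee 3)"
    and W1: "lookup m (Fe 1) + lookup m (Fe 2) = lookup m' (Fe 1) + lookup m' (Fe 2)"
    and W2: "lookup m (Fe 2) + lookup m (Fe 3) = lookup m' (Fe 2) + lookup m' (Fe 3)"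
    using at[of "Z 1"] at[of "Z 2"] at[of "W 1"] at[of "W 2"] by (simp_all only: vertices)
  have "(\<Sum>i=1..t. lookup m (A i)) + (\<Sum>i=1..t. lookup m (B i))
      = (\<Sum>i=1..t. lookup m' (A i)) + (\<Sum>i=1..t. lookup m' (B i))"
    using Y by (simp flip: sum.distrib)
  from triangle_exponents_determined[OF Z1 Z2 W1 W2 X1 X2 this]
  have E2: "lookup m (Ee 2) = lookup m' (Ee 2)" and F2: "lookup m (Fe 2) = lookup m' (Fe 2)"
    using standard_sum_A_le_1[OF m(2)] standard_sum_A_le_1[OF m'(2)] by blast+
  have "(\<Sum>i=1..t. lookup m (A i)) = (\<Sum>i=1..t. lookup m' (A i))"
    using X1 Z1 Z2 E2 by linarith
  note A = standard_A_determined[OF m(2) m'(2) this Y]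
  show ?thesis
  proof (rule poly_mapping_eqI)
    fix e
    show "lookup m e = lookup m' e"
    proof (cases "e \<in> Et t")
      case True
      then show ?thesis
        using A Y Z1 Z2 E2 W1 W2 F2 by (cases e) (auto simp: eval_nat_numeral le_Suc_eq)
    next
      case False
      then show ?thesis
        using m(1) m'(1) by (simp add: lookup_outside_Et)
    qed
  qed
qed

lemma standard_least_in_fibre:
  assumes "is_mono t m" "standard t m"
  shows "is_mono t m' \<Longrightarrow> img m' = img m \<Longrightarrow> m' \<noteq> m \<Longrightarrow> grevlex_less t m m'"
proof (induction "a_weight t m'" arbitrary: m' rule: less_induct)
  case less
  show ?case
  proof (cases "standard t m'")
    case True
    with assms less.prems show ?thesis
      using standard_unique_in_fibre by metis
  next
    case False
    then obtain d where d: "d \<in> set (gen_indices t)" "mdvd (gen_mono d) m'"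
      by (auto simp: standard_def)
    define m'' where "m'' = m' - gen_mono d + gen_tail d"
    note step = reduction_step[OF d less.prems(1), folded m''_def]
    show ?thesis
    proof (cases "m'' = m")
      case False
      with less.hyps step less.prems(2) have "grevlex_less t m m''"
        by simp
      then show ?thesis using step(4) by (rule grevlex_less_trans)
    qed (use step(4) in simp)
  qed
qed

lemma initial_monos_eq:
  "initial_monos TYPE('k::field) t = {m. is_mono t m \<and> (\<exists>d\<in>set (gen_indices t). mdvd (gen_mono d) m)}"
proof (intro set_eqI iffI CollectI conjI)
  fix m
  assume "m \<in> initial_monos TYPE('k) t"
  then obtain m' where m: "is_mono t m" and m': "is_mono t m'" "img m' = img m" "m' \<noteq> m"
    and less: "grevlex_less t m' m"
    by (auto simp: initial_monos_iff)
  show "is_mono t m" by (fact m)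
  have "\<not> standard t m"
    using standard_least_in_fibre[OF m _ m'] less grevlex_less_trans grevlex_less_irrefl by blast
  then show "\<exists>d\<in>set (gen_indices t). mdvd (gen_mono d) m"
    by (auto simp: standard_def)
next
  fix m
  assume "m \<in> {m. is_mono t m \<and> (\<exists>d\<in>set (gen_indices t). mdvd (gen_mono d) m)}"
  then obtain d where m: "is_mono t m" and d: "d \<in> set (gen_indices t)" "mdvd (gen_mono d) m"
    by blast
  note step = reduction_step[OF d m]
  have "m - gen_mono d + gen_tail d \<noteq> m"
    using step(4) grevlex_less_irrefl by metis
  with step m show "m \<in> initial_monos TYPE('k) t"
    by (auto simp: initial_monos_iff)
qed

lemma gen_mono_antichain:
  assumes "d \<in> set (gen_indices t)" "d' \<in> set (gen_indices t)" "mdvd (gen_mono d) (gen_mono d')"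
  shows "d = d'"
  using assms by (cases d rule: gen_index.exhaust; cases d' rule: gen_index.exhaust)
    (auto simp: Poly_Mapping.lookup_add split: if_splits)

lemma set_gens_eq_min_gens: "set (gens t) = min_gens (initial_monos TYPE('k::field) t)"
proof (intro set_eqI iffI)
  fix g
  assume "g \<in> set (gens t)"
  then obtain d where d: "d \<in> set (gen_indices t)" "g = gen_mono d"
    by (auto simp: gens_eq_map_gen_mono)
  have "m = g" if "m \<in> initial_monos TYPE('k) t" "mdvd m g" for m
  proof -
    from that(1) obtain d' where d': "d' \<in> set (gen_indices t)" "mdvd (gen_mono d') m"
      by (auto simp: initial_monos_eq)
    with that(2) d have "d' = d"
      by (metis gen_mono_antichain mdvd_trans)
    with d d' that(2) show "m = g"
      using mdvd_antisym by blast
  qed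
  moreover have "g \<in> initial_monos TYPE('k) t"
    unfolding initial_monos_eq using d is_mono_gen_mono mdvd_refl by blast
  ultimately show "g \<in> min_gens (initial_monos TYPE('k) t)"
    by (simp add: min_gens_def)
next
  fix m
  assume m: "m \<in> min_gens (initial_monos TYPE('k) t)"
  then obtain d where d: "d \<in> set (gen_indices t)" "mdvd (gen_mono d) m"
    by (auto simp: min_gens_def initial_monos_eq)
  moreover have "gen_mono d \<in> initial_monos TYPE('k) t"
    unfolding initial_monos_eq using d is_mono_gen_mono mdvd_refl by blast
  ultimately have "gen_mono d = m"
    using m by (simp add: min_gens_def)
  with d show "m \<in> set (gens t)"
    by (auto simp: gens_eq_map_gen_mono)
qed

lemma distinct_gens: "distinct (gens t)"
proof -
  have "distinct (gen_indices t)"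
    using sorted_gen_indices listed_before_irrefl by (rule distinct_if_sorted_wrt_irrefl)
  moreover have "inj_on gen_mono (set (gen_indices t))"
    by (rule inj_onI) (metis gen_mono_antichain mdvd_refl)
  ultimately show ?thesis
    by (simp add: gens_eq_map_gen_mono distinct_map)
qed

section \<open>Linear quotients\<close>

lemma var_mem_colon_monos_iff:
  "var v \<in> colon_monos t gs j \<longleftrightarrow> v \<in> Et t \<and> (\<exists>i<j. mdvd (gs ! i) (var v + gs ! j))"
  by (simp add: colon_monos_def)

lemma linear_quotients_if_variable_witnesses:
  assumes "\<And>i j. 1 \<le> j \<Longrightarrow> j < length gs \<Longrightarrow> i < j \<Longrightarrow>
    \<exists>v. lookup (gs ! j) v < lookup (gs ! i) v \<and> var v \<in> colon_monos t gs j"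
  shows "linear_quotients t gs"
  unfolding linear_quotients_def generated_by_vars_def
proof (intro allI impI ballI)
  fix j u
  assume j: "1 \<le> j \<and> j < length gs" and u: "u \<in> colon_monos t gs j"
  then obtain i where "i < j" and dvd: "mdvd (gs ! i) (u + gs ! j)"
    by (auto simp: colon_monos_def)
  with assms j obtain v where v: "lookup (gs ! j) v < lookup (gs ! i) v" "var v \<in> colon_monos t gs j"
    by blast
  \<comment> \<open>v divides the quotient of gs ! i by its gcd with gs ! j, which divides u\<close>
  have "mdvd (var v) u"
    using dvd v(1) by (auto simp: mdvd_def Poly_Mapping.lookup_add dest: spec[of _ v])
  with v(2) show "\<exists>v\<in>Et t. var v \<in> colon_monos t gs j \<and> mdvd (var v) u"
    by (auto simp: var_mem_colon_monos_iff)
qed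

definition colon_var :: "nat \<Rightarrow> gen_index \<Rightarrow> edge \<Rightarrow> bool" where
  "colon_var t d0 v \<longleftrightarrow> v \<in> Et t \<and>
     (\<exists>d\<in>set (gen_indices t). listed_before d d0 \<and> mdvd (gen_mono d) (var v + gen_mono d0))"

lemma var_mem_colon_monos_gens_iff:
  assumes "q < length (gen_indices t)"
  shows "var v \<in> colon_monos t (gens t) q \<longleftrightarrow> colon_var t (gen_indices t ! q) v"
proof -
  have "(\<exists>i<q. mdvd (gens t ! i) (var v + gens t ! q)) \<longleftrightarrow>
        (\<exists>i<q. mdvd (gen_mono (gen_indices t ! i)) (var v + gen_mono (gen_indices t ! q)))"
    using assms by (auto simp: gens_eq_map_gen_mono)
  also have "\<dots> \<longleftrightarrow> (\<exists>d\<in>set (gen_indices t). listed_before d (gen_indices t ! q)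
                        \<and> mdvd (gen_mono d) (var v + gen_mono (gen_indices t ! q)))"
    by (rule sorted_wrt_ex_nth_less_iff[OF sorted_gen_indices listed_before_irrefl
          listed_before_asym assms])
  finally show ?thesis
    by (simp add: var_mem_colon_monos_iff colon_var_def)
qed

lemma colon_varI:
  "v \<in> Et t \<Longrightarrow> d \<in> set (gen_indices t) \<Longrightarrow> listed_before d d0 \<Longrightarrow>
    mdvd (gen_mono d) (var v + gen_mono d0) \<Longrightarrow> colon_var t d0 v"
  unfolding colon_var_def by blast

lemma colon_var_M1:
  assumes "1 \<le> j" "j < i" "i \<le> t"
  shows "i < k \<Longrightarrow> k \<le> t \<Longrightarrow> colon_var t (M1 i j) (A k)"
    and "j < l \<Longrightarrow> l < i \<Longrightarrow> colon_var t (M1 i j) (B l)"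
  using assms
  by (auto intro: colon_varI[where d = "M1 k j"] colon_varI[where d = "M1 i l"]
      simp: Poly_Mapping.lookup_add)

lemma colon_var_M2:
  assumes "1 \<le> i" "i < j" "j \<le> t"
  shows "i < k \<Longrightarrow> k \<le> t \<Longrightarrow> k \<noteq> j \<Longrightarrow> colon_var t (M2 i j) (A k)"
    and "1 \<le> l \<Longrightarrow> l < j \<Longrightarrow> colon_var t (M2 i j) (B l)"
  using assms
  by (auto intro: colon_varI[where d = "M2 (min j k) (max j k)"] colon_varI[where d = "M1 j l"]
      simp: Poly_Mapping.lookup_add min_def max_def)

lemma colon_var_M3:
  assumes "1 \<le> i" "i \<le> t"
  shows "1 \<le> k \<Longrightarrow> k \<le> t \<Longrightarrow> k \<noteq> i \<Longrightarrow> colon_var t (M3 i) (A k)"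
    and "1 \<le> l \<Longrightarrow> l < i \<Longrightarrow> colon_var t (M3 i) (B l)"
  using assms
  by (auto intro: colon_varI[where d = "M2 (min i k) (max i k)"] colon_varI[where d = "M1 i l"]
      simp: Poly_Mapping.lookup_add)

fun colon_witness :: "gen_index \<Rightarrow> gen_index \<Rightarrow> edge" where
  "colon_witness (M1 i j) (M1 k l) = (if k = i then B l else A k)"
| "colon_witness (M2 i j) (M1 k l) = (if l < j then B l else A k)"
| "colon_witness (M2 i j) (M2 k l) = (if l = j then A k else A l)"
| "colon_witness (M3 i) (M1 k l) = (if k = i then B l else A k)"
| "colon_witness (M3 i) (M2 k l) = (if l = i then A k else A l)"
| "colon_witness (M3 i) (M3 k) = A k"
| "colon_witness _ _ = undefined"

lemma colon_witness:
  assumes "d0 \<in> set (gen_indices t)" "d \<in> set (gen_indices t)" "listed_before d d0"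
  shows "lookup (gen_mono d0) (colon_witness d0 d) < lookup (gen_mono d) (colon_witness d0 d)"
    and "colon_var t d0 (colon_witness d0 d)"
  using assms
  by (cases d0 rule: gen_index.exhaust; cases d rule: gen_index.exhaust;
      auto simp: Poly_Mapping.lookup_add intro: colon_var_M1 colon_var_M2 colon_var_M3)+

lemma linear_quotients_gens: "linear_quotients t (gens t)"
proof (rule linear_quotients_if_variable_witnesses)
  fix i j
  assume "1 \<le> j" "j < length (gens t)" "i < j"
  then have j: "j < length (gen_indices t)" and i: "i < length (gen_indices t)"
    by (simp_all add: gens_eq_map_gen_mono)
  let ?dj = "gen_indices t ! j" and ?di = "gen_indices t ! i"
  have "listed_before ?di ?dj"
    using sorted_wrt_nth_less[OF sorted_gen_indices \<open>i < j\<close> j] .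
  then show "\<exists>v. lookup (gens t ! j) v < lookup (gens t ! i) v \<and> var v \<in> colon_monos t (gens t) j"
    using colon_witness[of ?dj t ?di] i j var_mem_colon_monos_gens_iff[OF j]
    by (auto simp: gens_eq_map_gen_mono)
qed

lemma colon_vars_subset:
  assumes "d0 \<in> set (gen_indices t)"
  shows "\<exists>x\<in>{1..t}. {v. colon_var t d0 v} \<subseteq> A ` ({1..t} - {x}) \<union> B ` {1..<t}"
proof -
  define x where "x = (case d0 of M1 i j \<Rightarrow> i | M2 i j \<Rightarrow> j | M3 i \<Rightarrow> i)"
  have "v \<in> A ` ({1..t} - {x}) \<union> B ` {1..<t}" if "colon_var t d0 v" for v
  proof -
    from that obtain d where "v \<in> Et t" "d \<in> set (gen_indices t)" "listed_before d d0"
        "mdvd (gen_mono d) (var v + gen_mono d0)"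
      by (auto simp: colon_var_def)
    with assms show ?thesis
      by (cases d0 rule: gen_index.exhaust; cases d rule: gen_index.exhaust; cases v)
        (auto simp: x_def Poly_Mapping.lookup_add split: if_splits)
  qed
  moreover have "x \<in> {1..t}"
    using assms by (cases d0 rule: gen_index.exhaust) (auto simp: x_def)
  ultimately show ?thesis by blast
qed

lemma card_colon_vars_le:
  assumes "d0 \<in> set (gen_indices t)"
  shows "card {v. colon_var t d0 v} \<le> 2 * t - 2"
proof -
  obtain x where x: "x \<in> {1..t}" and sub: "{v. colon_var t d0 v} \<subseteq> A ` ({1..t} - {x}) \<union> B ` {1..<t}"
    using colon_vars_subset[OF assms] by blast
  have "card {v. colon_var t d0 v} \<le> card (A ` ({1..t} - {x}) \<union> B ` {1..<t})"
    using sub by (intro card_mono) auto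
  also have "\<dots> \<le> card (A ` ({1..t} - {x})) + card (B ` {1..<t})"
    by (rule card_Un_le)
  also have "\<dots> \<le> card ({1..t} - {x}) + card {1..<t}"
    by (intro add_mono card_image_le) auto
  also have "\<dots> = 2 * t - 2"
    using x by simp
  finally show ?thesis .
qed

lemma card_colon_vars_M3_last:
  assumes "1 \<le> t"
  shows "card {v. colon_var t (M3 t) v} = 2 * t - 2"
proof (rule antisym)
  show "card {v. colon_var t (M3 t) v} \<le> 2 * t - 2"
    using assms by (intro card_colon_vars_le) simp
  have "A ` {1..<t} \<union> B ` {1..<t} \<subseteq> {v. colon_var t (M3 t) v}"
    using assms colon_var_M3[of t t] by auto
  moreover have "finite {v. colon_var t (M3 t) v}"
    using finite_Et by (rule rev_finite_subset) (auto simp: colon_var_def)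
  ultimately have "card (A ` {1..<t} \<union> B ` {1..<t}) \<le> card {v. colon_var t (M3 t) v}"
    by (rule card_mono[rotated])
  moreover have "card (A ` {1..<t} \<union> B ` {1..<t}) = 2 * t - 2"
    by (subst card_Un_disjoint) (auto simp: card_image inj_on_def)
  ultimately show "2 * t - 2 \<le> card {v. colon_var t (M3 t) v}"
    by simp
qed

lemma n_gens_eq_card_colon_vars:
  assumes "1 \<le> p" "p \<le> t ^ 2"
  shows "n_gens t (gens t) p = card {v. colon_var t (gen_indices t ! (p - 1)) v}"
proof -
  have "p - 1 < length (gen_indices t)"
    using assms by (simp add: length_gen_indices)
  then show ?thesis
    by (simp add: n_gens_def var_mem_colon_monos_gens_iff colon_var_def)
qed

lemma max_n_gens:
  assumes "2 \<le> t"
  shows "Max {n_gens t (gens t) p | p. 2 \<le> p \<and> p \<le> t ^ 2} = 2 * t - 2"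
proof (rule Max_eqI)
  show "finite {n_gens t (gens t) p | p. 2 \<le> p \<and> p \<le> t ^ 2}"
    by simp
next
  fix n
  assume "n \<in> {n_gens t (gens t) p | p. 2 \<le> p \<and> p \<le> t ^ 2}"
  then obtain p where p: "2 \<le> p" "p \<le> t ^ 2" and n: "n = n_gens t (gens t) p"
    by blast
  then have "gen_indices t ! (p - 1) \<in> set (gen_indices t)"
    by (simp add: length_gen_indices)
  then show "n \<le> 2 * t - 2"
    using p n by (simp add: n_gens_eq_card_colon_vars card_colon_vars_le)
next
  have "M3 t \<in> set (gen_indices t)"
    using assms by simp
  then obtain q where q: "q < length (gen_indices t)" "gen_indices t ! q = M3 t"
    by (auto simp: in_set_conv_nth)
  have card: "n_gens t (gens t) (q + 1) = 2 * t - 2"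
    using q assms by (simp add: n_gens_eq_card_colon_vars length_gen_indices card_colon_vars_M3_last)
  have "q \<noteq> 0"
  proof
    assume "q = 0"
    then have "n_gens t (gens t) (q + 1) = 0"
      by (simp add: n_gens_def colon_monos_def)
    with card assms show False by simp
  qed
  with q card show "2 * t - 2 \<in> {n_gens t (gens t) p | p. 2 \<le> p \<and> p \<le> t ^ 2}"
    by (auto simp: length_gen_indices intro!: exI[of _ "q + 1"])
qed

theorem theorem3p5:
  fixes t :: nat
  assumes "t \<ge> 2"
    and alg_closed: "\<forall>q :: 'k::field_char_0 poly. degree q > 0 \<longrightarrow> (\<exists>x. poly q x = 0)"
  shows "distinct (gens t)
    \<and> set (gens t) = min_gens (initial_monos TYPE('k) t)
    \<and> length (gens t) = t ^ 2
    \<and> linear_quotients t (gens t)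
    \<and> Max {n_gens t (gens t) p | p. 2 \<le> p \<and> p \<le> t ^ 2} = 2 * t - 2"
proof -
  have "length (gens t) = t ^ 2"
    by (simp add: gens_eq_map_gen_mono length_gen_indices)
  then show ?thesis
    using distinct_gens set_gens_eq_min_gens linear_quotients_gens max_n_gens[OF assms(1)] by blast
qed

end
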